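(* Let $\phi$ be a repulsive pair potential on $\mathbb{R}^d$, $\lambda>0$, and $\Lambda_n=[-n,n]^d$. For $t\in\mathbb{R}$ define the activity function $\boldsymbol{\lambda}_t(x)=\lambda\mathbf 1\{x\in\Lambda_n\}\mathbf 1\{x_1\ge t\}$. Then $$\log Z_{\Lambda_n}(\lambda)=\int_{\Lambda_n}\rho_{\boldsymbol{\lambda}_{x_1}}(x)\,dx.$$
   Context: $\phi$ symmetric, $\phi\ge0$ (finite range); $H=\sum_{i<j}\phi(x_i-x_j)$; $Z_\Lambda(\lambda)=1+\sum_{k\ge1}\frac{\lambda^k}{k!}\int_{\Lambda^k}e^{-H}dx$. For a bounded, boundedly supported activity function $\boldsymbol{\lambda}$, $\mu_{\boldsymbol{\lambda}}$ is the Gibbs point process with density $\prod\boldsymbol{\lambda}(x_i)e^{-H}/Z(\boldsymbol{\lambda})$ and $\rho_{\boldsymbol{\lambda}}(v)=\boldsymbol{\lambda}(v)\mathbb{E}_{\mu_{\boldsymbol{\lambda}}}e^{-\sum_{x\in\mathbf X}\phi(v-x)}$ is its one-point density. $x_1$ denotes the first coordinate of $x$. *)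

theory Defs
  imports "HOL-Analysis.Analysis"
begin

text \<open>Points of R^d are elements of real^'d (d = CARD('d)).
  A pair potential takes values in [0, +infinity]; its Boltzmann factor e^{-phi}
  is 0 where phi = +infinity.\<close>

definition boltz :: "('a \<Rightarrow> ereal) \<Rightarrow> 'a \<Rightarrow> real" where
  "boltz \<phi> x = (if \<phi> x = \<infinity> then 0 else exp (- real_of_ereal (\<phi> x)))"

definition gibbs_weight :: "('a::ab_group_add \<Rightarrow> ereal) \<Rightarrow> nat \<Rightarrow> (nat \<Rightarrow> 'a) \<Rightarrow> real" where
  "gibbs_weight \<phi> k xs = (\<Prod>i<k. \<Prod>j\<in>{i<..<k}. boltz \<phi> (xs i - xs j))"

definition lebk :: "nat \<Rightarrow> (nat \<Rightarrow> real^'d) measure" where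
  "lebk k = PiM {..<k} (\<lambda>_. lborel)"

definition Z_vol :: "(real^'d \<Rightarrow> ereal) \<Rightarrow> (real^'d) set \<Rightarrow> real \<Rightarrow> real" where
  "Z_vol \<phi> \<Lambda> l = 1 + (\<Sum>k. l ^ Suc k / fact (Suc k) *
      (\<integral>xs. indicator (PiE {..<Suc k} (\<lambda>_. \<Lambda>)) xs * gibbs_weight \<phi> (Suc k) xs \<partial>lebk (Suc k)))"

text \<open>k-point integral int_{(R^d)^k} prod_i lam(x_i) e^{-H(x)} F(x) dx for a
  function F of the (ordered representation of the) configuration.\<close>
definition janossy_int :: "(real^'d \<Rightarrow> ereal) \<Rightarrow> (real^'d \<Rightarrow> real) \<Rightarrow> nat
      \<Rightarrow> (nat \<Rightarrow> (nat \<Rightarrow> real^'d) \<Rightarrow> real) \<Rightarrow> real" where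
  "janossy_int \<phi> lam k F =
     (\<integral>xs. (\<Prod>i<k. lam (xs i)) * gibbs_weight \<phi> k xs * F k xs \<partial>lebk k)"

definition Z_act :: "(real^'d \<Rightarrow> ereal) \<Rightarrow> (real^'d \<Rightarrow> real) \<Rightarrow> real" where
  "Z_act \<phi> lam = 1 + (\<Sum>k. janossy_int \<phi> lam (Suc k) (\<lambda>_ _. 1) / fact (Suc k))"

text \<open>Expectation under the Gibbs point process mu_lam, whose density with respect
  to Lebesgue measure on finite configurations is prod lam(x_i) e^{-H}/Z(lam):
  E F = (F(empty) + sum_{k>=1} 1/k! int prod lam(x_i) e^{-H} F(x) dx) / Z(lam).\<close>
definition gibbs_expect :: "(real^'d \<Rightarrow> ereal) \<Rightarrow> (real^'d \<Rightarrow> real)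
      \<Rightarrow> (nat \<Rightarrow> (nat \<Rightarrow> real^'d) \<Rightarrow> real) \<Rightarrow> real" where
  "gibbs_expect \<phi> lam F =
     (F 0 (\<lambda>_. undefined) + (\<Sum>k. janossy_int \<phi> lam (Suc k) F / fact (Suc k))) / Z_act \<phi> lam"

definition one_point_density :: "(real^'d \<Rightarrow> ereal) \<Rightarrow> (real^'d \<Rightarrow> real) \<Rightarrow> real^'d \<Rightarrow> real" where
  "one_point_density \<phi> lam v =
     lam v * gibbs_expect \<phi> lam (\<lambda>k xs. \<Prod>i<k. boltz \<phi> (v - xs i))"

definition cube :: "nat \<Rightarrow> (real^'d) set" where
  "cube n = {x. \<forall>i. - real n \<le> x $ i \<and> x $ i \<le> real n}"

text \<open>Activity lambda_t(x) = lambda 1{x in Lambda_n} 1{x_1 >= t}; the coordinate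
  playing the role of x_1 is the index j.\<close>
definition act_t :: "real \<Rightarrow> nat \<Rightarrow> 'd \<Rightarrow> real \<Rightarrow> real^'d \<Rightarrow> real" where
  "act_t l n j t x = l * indicator (cube n) x * indicator {y. y $ j \<ge> t} x"

end

theory Submission
  imports Defs
begin

text \<open>
  Write \<open>\<lambda>\<^sub>t\<close> for the activity \<open>act_t l n j t\<close> and \<open>Z\<close> for \<open>Z_act \<phi>\<close>, and take \<open>j\<close> to be the
  first coordinate. Let \<open>\<Xi>(x)\<close> be the partition function of the activity
  \<open>y \<mapsto> \<lambda>\<^bsub>x\<^sub>1\<^esub>(y) exp (- \<phi> (x - y))\<close> and \<open>f(x) = \<lambda> 1\<^sub>\<Lambda>(x) \<Xi>(x)\<close>. As
  \<open>\<rho>\<^sub>\<lambda>(v) = \<lambda>(v) Z(\<lambda> exp (- \<phi> (v - \<cdot>))) / Z(\<lambda>)\<close>, on \<open>\<Lambda>\<close> we have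
  \<open>\<rho>\<^bsub>\<lambda>\<^sub>x\<^sub>1\<^esub>(x) = f(x) / Z(\<lambda>\<^bsub>x\<^sub>1\<^esub>)\<close>.
  Splitting every configuration at its point with the smallest first coordinate (ties form a
  null set) and using the symmetry of the integrands gives \<open>Z(\<lambda>\<^sub>t) = 1 + \<integral>\<^bsub>y\<^sub>1 \<ge> t\<^esub> f\<close>; in
  particular \<open>Z\<^sub>\<Lambda>(\<lambda>) = Z(\<lambda>\<^bsub>-n\<^esub>) = 1 + A\<close> with \<open>A = \<integral> f\<close>. With the mass
  \<open>G(t) = \<integral>\<^bsub>y\<^sub>1 \<le> t\<^esub> f\<close> below \<open>t\<close>, the claim thus becomes
  \<open>\<integral> f(x) / (1 + A - G(x\<^sub>1)) dx = log (1 + A)\<close>, which the substitution \<open>s = G(x\<^sub>1)\<close> would turn into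
  \<open>\<integral>\<^sub>0\<^sup>A ds / (1 + A - s)\<close>. Instead, expanding the integrand in powers of \<open>G(x\<^sub>1) / (1 + A)\<close> reduces
  it to the moments \<open>\<integral> f(x) G(x\<^sub>1)\<^sup>m dx = A\<^bsup>m+1\<^esup> / (m + 1)\<close>, which follow from the same
  symmetrization.
\<close>

section \<open>Boltzmann factors and Gibbs weights\<close>

lemma boltz_nonneg [simp]: "0 \<le> boltz \<phi> x"
  by (simp add: boltz_def)

lemma boltz_le_1: "0 \<le> \<phi> x \<Longrightarrow> boltz \<phi> x \<le> 1"
  by (cases "\<phi> x") (auto simp: boltz_def)

lemma borel_measurable_boltz [measurable]:
  assumes [measurable]: "\<phi> \<in> borel_measurable M"
  shows "boltz \<phi> \<in> borel_measurable M"
  unfolding boltz_def by measurable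

lemma boltz_diff_commute:
  fixes a b :: "'a::ab_group_add"
  assumes "\<And>x. \<phi> (- x) = \<phi> x"
  shows "boltz \<phi> (a - b) = boltz \<phi> (b - a)"
  using assms[of "a - b"] by (simp add: boltz_def)

lemma gibbs_weight_nonneg: "0 \<le> gibbs_weight \<phi> k xs"
  unfolding gibbs_weight_def by (intro prod_nonneg) auto

lemma gibbs_weight_le_1: "(\<And>x. 0 \<le> \<phi> x) \<Longrightarrow> gibbs_weight \<phi> k xs \<le> 1"
  unfolding gibbs_weight_def by (intro prod_le_1 conjI prod_nonneg boltz_le_1) auto

lemma gibbs_weight_cong: "(\<And>i. i < k \<Longrightarrow> xs i = ys i) \<Longrightarrow> gibbs_weight \<phi> k xs = gibbs_weight \<phi> k ys"
  unfolding gibbs_weight_def by (intro prod.cong refl) auto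

lemma gibbs_weight_fun_upd:
  "gibbs_weight \<phi> (Suc K) (xs(K := x)) = gibbs_weight \<phi> K xs * (\<Prod>i<K. boltz \<phi> (xs i - x))"
proof -
  have "{i<..<Suc K} = insert K {i<..<K}" if "i < K" for i
    using that by auto
  then have "gibbs_weight \<phi> (Suc K) (xs(K := x)) =
      (\<Prod>i<K. boltz \<phi> (xs i - x) * (\<Prod>m\<in>{i<..<K}. boltz \<phi> (xs i - xs m)))"
    by (simp add: gibbs_weight_def)
  then show ?thesis
    by (simp add: gibbs_weight_def prod.distrib mult.commute)
qed

text \<open>Squaring turns the product over the pairs \<open>i < m\<close> into one over all ordered pairs
  \<open>i \<noteq> m\<close>, which every permutation preserves.\<close>

lemma gibbs_weight_square:
  assumes "\<And>x. \<phi> (- x) = \<phi> x"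
  shows "(gibbs_weight \<phi> N xs)\<^sup>2 = (\<Prod>(i, m) \<in> {(i, m). i < N \<and> m < N \<and> i \<noteq> m}. boltz \<phi> (xs i - xs m))"
proof -
  let ?b = "\<lambda>(i, m). boltz \<phi> (xs i - xs m)"
  let ?U = "Sigma {..<N} (\<lambda>i. {i<..<N})"
  have pairs_split: "{(i, m). i < N \<and> m < N \<and> i \<noteq> m} = ?U \<union> prod.swap ` ?U"
    by (auto simp: image_iff)
  have upper: "(\<Prod>p\<in>?U. ?b p) = gibbs_weight \<phi> N xs"
    unfolding gibbs_weight_def by (subst prod.Sigma) auto
  have "(\<Prod>p\<in>prod.swap ` ?U. ?b p) = (\<Prod>p\<in>?U. ?b (prod.swap p))"
    by (simp add: prod.reindex)
  also have "\<dots> = gibbs_weight \<phi> N xs"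
    using boltz_diff_commute[of \<phi>, OF assms] upper by (simp add: case_prod_beta)
  finally show ?thesis
    unfolding pairs_split using upper by (subst prod.union_disjoint) (auto simp: power2_eq_square)
qed

lemma gibbs_weight_permute:
  assumes sym: "\<And>x. \<phi> (- x) = \<phi> x" and p: "p permutes {..<N}"
  shows "gibbs_weight \<phi> N (xs \<circ> p) = gibbs_weight \<phi> N xs"
proof -
  let ?D = "{(i, m). i < N \<and> m < N \<and> i \<noteq> m}"
  have inv: "inv p permutes {..<N}"
    using p by (rule permutes_inv)
  have "bij_betw (map_prod p p) ?D ?D"
  proof (rule bij_betw_byWitness[where f' = "map_prod (inv p) (inv p)"])
    show "map_prod p p ` ?D \<subseteq> ?D" "map_prod (inv p) (inv p) ` ?D \<subseteq> ?D"
      using permutes_in_image[OF p] permutes_in_image[OF inv] permutes_inj[OF p] permutes_inj[OF inv]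
      by (auto dest: injD)
  qed (auto simp: permutes_inverses[OF p])
  then have "(\<Prod>(i, m)\<in>?D. boltz \<phi> ((xs \<circ> p) i - (xs \<circ> p) m)) = (\<Prod>(i, m)\<in>?D. boltz \<phi> (xs i - xs m))"
    using prod.reindex_bij_betw[of "map_prod p p" ?D ?D "\<lambda>(i, m). boltz \<phi> (xs i - xs m)"]
    by (simp add: split_def)
  then have "(gibbs_weight \<phi> N (xs \<circ> p))\<^sup>2 = (gibbs_weight \<phi> N xs)\<^sup>2"
    by (simp only: gibbs_weight_square[of \<phi>, OF sym])
  then show ?thesis
    by (rule power2_eq_imp_eq) (simp_all add: gibbs_weight_nonneg)
qed

lemma janossy_integrand_permute:
  assumes "\<And>x. \<phi> (- x) = \<phi> x" and p: "p permutes {..<N}"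
  shows "(\<Prod>i<N. lam ((\<lambda>i\<in>{..<N}. xs (p i)) i)) * gibbs_weight \<phi> N (\<lambda>i\<in>{..<N}. xs (p i))
    = (\<Prod>i<N. lam (xs i)) * gibbs_weight \<phi> N xs"
proof -
  have "gibbs_weight \<phi> N (\<lambda>i\<in>{..<N}. xs (p i)) = gibbs_weight \<phi> N (xs \<circ> p)"
    by (intro gibbs_weight_cong) simp
  then show ?thesis
    using prod.permute[OF p, of "\<lambda>i. lam (xs i)"] gibbs_weight_permute[of \<phi>, OF assms]
    by (simp add: comp_def)
qed

section \<open>Symmetric integrands on finite powers of a measure\<close>

lemma prod_mult_indicator:
  fixes f :: "'i \<Rightarrow> 'b::comm_semiring_1"
  assumes "finite I"
  shows "(\<Prod>i\<in>I. f i * indicator A (x i)) = (\<Prod>i\<in>I. f i) * indicator {x. \<forall>i\<in>I. x i \<in> A} x"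
proof (cases "\<forall>i\<in>I. x i \<in> A")
  case False
  then obtain i where "i \<in> I" "x i \<notin> A"
    by auto
  with assms have "(\<Prod>i\<in>I. f i * indicator A (x i)) = 0"
    by (intro prod_zero bexI[of _ i]) auto
  with \<open>i \<in> I\<close> \<open>x i \<notin> A\<close> show ?thesis
    by (auto simp: indicator_def)
qed simp

lemma vimage_restrict_permute_PiE:
  assumes p: "p permutes I" and A: "\<And>i. i \<in> I \<Longrightarrow> A i \<subseteq> S"
  shows "(\<lambda>xs. \<lambda>i\<in>I. xs (p i)) -` PiE I A \<inter> PiE I (\<lambda>_. S) = PiE I (\<lambda>k. A (inv p k))"
proof (intro set_eqI iffI)
  have q: "inv p permutes I"
    using p by (rule permutes_inv)
  fix xs
  show "xs \<in> PiE I (\<lambda>k. A (inv p k))" if "xs \<in> (\<lambda>xs. \<lambda>i\<in>I. xs (p i)) -` PiE I A \<inter> PiE I (\<lambda>_. S)"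
    using that permutes_in_image[OF q] permutes_inverses[OF p]
    by (auto simp: PiE_iff) (metis restrict_apply')
  show "xs \<in> (\<lambda>xs. \<lambda>i\<in>I. xs (p i)) -` PiE I A \<inter> PiE I (\<lambda>_. S)" if xs: "xs \<in> PiE I (\<lambda>k. A (inv p k))"
  proof -
    have "xs (p i) \<in> A i" if "i \<in> I" for i
      using xs that permutes_in_image[OF p, of i] permutes_inverses(2)[OF p, of i] by (metis PiE_mem)
    moreover have "xs k \<in> S" if "k \<in> I" for k
      using xs that A permutes_in_image[OF q, of k] by (auto simp: PiE_iff)
    ultimately show ?thesis
      using xs by (auto simp: PiE_iff)
  qed
qed

context sigma_finite_measure
begin

lemma distr_PiM_permute:
  assumes I: "finite I" and p: "p permutes I"
  shows "distr (PiM I (\<lambda>_. M)) (PiM I (\<lambda>_. M)) (\<lambda>xs. \<lambda>i\<in>I. xs (p i)) = PiM I (\<lambda>_. M)"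
proof -
  interpret product_sigma_finite "\<lambda>_::'i. M"
    by (simp add: product_sigma_finite_def sigma_finite_measure_axioms)
  let ?t = "\<lambda>xs. \<lambda>i\<in>I. xs (p i)"
  have q: "inv p permutes I"
    using p by (rule permutes_inv)
  have t: "?t \<in> measurable (PiM I (\<lambda>_. M)) (PiM I (\<lambda>_. M))"
    by (intro measurable_restrict measurable_component_singleton) (simp add: permutes_in_image[OF p])
  show ?thesis
  proof (rule PiM_eqI[OF I])
    fix A assume A: "\<And>i. i \<in> I \<Longrightarrow> A i \<in> sets M"
    then have "emeasure (distr (PiM I (\<lambda>_. M)) (PiM I (\<lambda>_. M)) ?t) (PiE I A)
        = emeasure (PiM I (\<lambda>_. M)) (PiE I (\<lambda>k. A (inv p k)))"
      using I by (simp add: emeasure_distr[OF t] sets_PiM_I_finite space_PiM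
          vimage_restrict_permute_PiE[OF p sets.sets_into_space[OF A]])
    also have "\<dots> = (\<Prod>k\<in>I. emeasure M (A (inv p k)))"
      using A permutes_in_image[OF q] by (simp add: emeasure_PiM[OF I])
    also have "\<dots> = (\<Prod>i\<in>I. emeasure M (A i))"
      using prod.permute[OF q, of "\<lambda>i. emeasure M (A i)"] by simp
    finally show "emeasure (distr (PiM I (\<lambda>_. M)) (PiM I (\<lambda>_. M)) ?t) (PiE I A)
        = (\<Prod>i\<in>I. emeasure M (A i))" .
  qed simp
qed

lemma nn_integral_PiM_permute:
  assumes "finite I" "p permutes I" and [measurable]: "f \<in> borel_measurable (PiM I (\<lambda>_. M))"
  shows "(\<integral>\<^sup>+xs. f (\<lambda>i\<in>I. xs (p i)) \<partial>PiM I (\<lambda>_. M)) = (\<integral>\<^sup>+xs. f xs \<partial>PiM I (\<lambda>_. M))"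
proof -
  have "(\<lambda>xs. \<lambda>i\<in>I. xs (p i)) \<in> measurable (PiM I (\<lambda>_. M)) (PiM I (\<lambda>_. M))"
    by (intro measurable_restrict measurable_component_singleton)
       (simp add: permutes_in_image[OF assms(2)])
  then show ?thesis
    by (subst (2) distr_PiM_permute[OF assms(1,2), symmetric]) (simp add: nn_integral_distr)
qed

lemma ennreal_integral_power_eq_nn_integral_PiM:
  fixes F :: "'a \<Rightarrow> real"
  assumes [measurable]: "F \<in> borel_measurable M" and "\<And>x. 0 \<le> F x" "integrable M F"
  shows "ennreal ((\<integral>x. F x \<partial>M) ^ m) = (\<integral>\<^sup>+xs. (\<Prod>i<m. ennreal (F (xs i))) \<partial>PiM {..<m} (\<lambda>_. M))"
proof -
  interpret product_sigma_finite "\<lambda>_::nat. M"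
    by (simp add: product_sigma_finite_def sigma_finite_measure_axioms)
  have "ennreal (\<integral>x. F x \<partial>M) = (\<integral>\<^sup>+x. ennreal (F x) \<partial>M)"
    using assms by (intro nn_integral_eq_integral[symmetric]) auto
  then have "ennreal ((\<integral>x. F x \<partial>M) ^ m) = (\<Prod>i<m. \<integral>\<^sup>+x. ennreal (F x) \<partial>M)"
    using assms by (simp add: ennreal_power[symmetric] Bochner_Integration.integral_nonneg)
  also have "\<dots> = (\<integral>\<^sup>+xs. (\<Prod>i<m. ennreal (F (xs i))) \<partial>PiM {..<m} (\<lambda>_. M))"
    by (rule product_nn_integral_prod[symmetric]) auto
  finally show ?thesis .
qed

lemma PiM_ties_null:
  fixes g :: "'a \<Rightarrow> real"
  assumes I: "finite I" "a \<in> I" "b \<in> I" "a \<noteq> b"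
    and [measurable]: "g \<in> borel_measurable M"
    and null: "\<And>c. {y \<in> space M. g y = c} \<in> null_sets M"
  shows "{xs \<in> space (PiM I (\<lambda>_. M)). g (xs a) = g (xs b)} \<in> null_sets (PiM I (\<lambda>_. M))"
proof -
  interpret product_sigma_finite "\<lambda>_::'i. M"
    by (simp add: product_sigma_finite_def sigma_finite_measure_axioms)
  let ?S = "{xs \<in> space (PiM I (\<lambda>_. M)). g (xs a) = g (xs b)}"
  have I_eq: "I = insert a (I - {a})"
    using I by auto
  have [measurable]: "(\<lambda>xs. xs a) \<in> measurable (PiM I (\<lambda>_. M)) M" "(\<lambda>xs. xs b) \<in> measurable (PiM I (\<lambda>_. M)) M"
    using I by (simp_all add: measurable_component_singleton)
  have S: "?S \<in> sets (PiM I (\<lambda>_. M))"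
    by measurable
  have "emeasure (PiM I (\<lambda>_. M)) ?S = (\<integral>\<^sup>+xs. indicator ?S xs \<partial>PiM (insert a (I - {a})) (\<lambda>_. M))"
    using S I_eq by simp
  also have "\<dots> = (\<integral>\<^sup>+xs. \<integral>\<^sup>+y. indicator ?S (xs(a := y)) \<partial>M \<partial>PiM (I - {a}) (\<lambda>_. M))"
    using S I_eq I by (intro product_nn_integral_insert) auto
  also have "\<dots> = (\<integral>\<^sup>+xs. 0 \<partial>PiM (I - {a}) (\<lambda>_. M))"
  proof (rule nn_integral_cong)
    fix xs assume xs: "xs \<in> space (PiM (I - {a}) (\<lambda>_. M))"
    have "(\<integral>\<^sup>+y. indicator ?S (xs(a := y)) \<partial>M) = (\<integral>\<^sup>+y. indicator {y \<in> space M. g y = g (xs b)} y \<partial>M)"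
      using I xs
      by (intro nn_integral_cong) (auto simp: space_PiM PiE_iff extensional_def split: split_indicator)
    also have "\<dots> = 0"
      using null[of "g (xs b)"] by (simp add: null_sets_def)
    finally show "(\<integral>\<^sup>+y. indicator ?S (xs(a := y)) \<partial>M) = 0" .
  qed
  finally show ?thesis
    using S by (simp add: null_sets_def)
qed

lemma AE_PiM_unique_argmin:
  fixes g :: "'a \<Rightarrow> real" and N :: nat
  assumes "0 < N" and [measurable]: "g \<in> borel_measurable M"
    and null: "\<And>c. {y \<in> space M. g y = c} \<in> null_sets M"
  shows "AE xs in PiM {..<N} (\<lambda>_. M). \<exists>a<N. \<forall>a'<N. (\<forall>b\<in>{..<N}. g (xs a') \<le> g (xs b)) \<longleftrightarrow> a' = a"
proof -
  have "AE xs in PiM {..<N} (\<lambda>_. M). \<forall>a\<in>{..<N}. \<forall>b\<in>{..<N}. a \<noteq> b \<longrightarrow> g (xs a) \<noteq> g (xs b)"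
  proof (intro eventually_ball_finite ballI finite_lessThan)
    fix a b assume "a \<in> {..<N}" "b \<in> {..<N}"
    show "AE xs in PiM {..<N} (\<lambda>_. M). a \<noteq> b \<longrightarrow> g (xs a) \<noteq> g (xs b)"
    proof (cases "a = b")
      case False
      have "{xs \<in> space (PiM {..<N} (\<lambda>_. M)). g (xs a) = g (xs b)} \<in> null_sets (PiM {..<N} (\<lambda>_. M))"
        using \<open>a \<in> {..<N}\<close> \<open>b \<in> {..<N}\<close> False by (intro PiM_ties_null null) auto
      from AE_not_in[OF this] AE_space show ?thesis
        by eventually_elim auto
    qed simp
  qed
  then show ?thesis
  proof (rule eventually_mono)
    fix xs assume distinct: "\<forall>a\<in>{..<N}. \<forall>b\<in>{..<N}. a \<noteq> b \<longrightarrow> g (xs a) \<noteq> g (xs b)"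
    obtain a where "is_arg_min (\<lambda>i. g (xs i)) (\<lambda>i. i \<in> {..<N}) a"
      using ex_is_arg_min_if_finite[of "{..<N}" "\<lambda>i. g (xs i)"] \<open>0 < N\<close> by auto
    then have a: "a < N" "\<forall>b\<in>{..<N}. g (xs a) \<le> g (xs b)"
      by (auto simp: is_arg_min_def not_less dest: leD)
    have "a' = a" if "a' < N" "\<forall>b\<in>{..<N}. g (xs a') \<le> g (xs b)" for a'
      using that a distinct by (meson antisym lessThan_iff)
    with a show "\<exists>a<N. \<forall>a'<N. (\<forall>b\<in>{..<N}. g (xs a') \<le> g (xs b)) \<longleftrightarrow> a' = a"
      by blast
  qed
qed

lemma pred_PiM_minimal_at:
  fixes g :: "'a \<Rightarrow> real" and N :: nat
  assumes [measurable]: "g \<in> borel_measurable M" and "a < N"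
  shows "Measurable.pred (PiM {..<N} (\<lambda>_. M)) (\<lambda>xs. \<forall>b\<in>{..<N}. g (xs a) \<le> g (xs b))"
proof (intro pred_intros_finite(3) finite_lessThan)
  fix b assume "b \<in> {..<N}"
  with \<open>a < N\<close> have [measurable]:
    "(\<lambda>xs. xs a) \<in> measurable (PiM {..<N} (\<lambda>_. M)) M" "(\<lambda>xs. xs b) \<in> measurable (PiM {..<N} (\<lambda>_. M)) M"
    by simp_all
  show "Measurable.pred (PiM {..<N} (\<lambda>_. M)) (\<lambda>xs. g (xs a) \<le> g (xs b))"
    unfolding pred_def by (rule borel_measurable_le) measurable
qed

lemma nn_integral_symmetric_minimal_at_eq:
  fixes g :: "'a \<Rightarrow> real" and N :: nat
  assumes [measurable]: "g \<in> borel_measurable M" "h \<in> borel_measurable (PiM {..<N} (\<lambda>_. M))"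
    and sym: "\<And>p xs. p permutes {..<N} \<Longrightarrow> xs \<in> space (PiM {..<N} (\<lambda>_. M)) \<Longrightarrow>
        h (\<lambda>i\<in>{..<N}. xs (p i)) = h xs"
    and "a < N" "c < N"
  shows "(\<integral>\<^sup>+xs. h xs * indicator {xs. \<forall>b\<in>{..<N}. g (xs a) \<le> g (xs b)} xs \<partial>PiM {..<N} (\<lambda>_. M)) =
    (\<integral>\<^sup>+xs. h xs * indicator {xs. \<forall>b\<in>{..<N}. g (xs c) \<le> g (xs b)} xs \<partial>PiM {..<N} (\<lambda>_. M))"
proof -
  let ?P = "PiM {..<N} (\<lambda>_. M)"
  define E where "E a = {xs. \<forall>b\<in>{..<N}. g (xs a) \<le> g (xs b)}" for a
  let ?\<tau> = "Transposition.transpose a c"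
  let ?swap = "\<lambda>xs. \<lambda>i\<in>{..<N}. xs (?\<tau> i)"
  have swap: "?\<tau> permutes {..<N}"
    using assms(4,5) by (simp add: permutes_swap_id)
  have "(\<lambda>xs. h xs * indicator (E a) xs) \<in> borel_measurable ?P"
    using pred_PiM_minimal_at[OF assms(1,4)] unfolding E_def by measurable
  from nn_integral_PiM_permute[OF finite_lessThan swap this]
  have "(\<integral>\<^sup>+xs. h xs * indicator (E a) xs \<partial>?P) = (\<integral>\<^sup>+xs. h (?swap xs) * indicator (E a) (?swap xs) \<partial>?P)"
    by simp
  also have "\<dots> = (\<integral>\<^sup>+xs. h xs * indicator (E c) xs \<partial>?P)"
  proof (rule nn_integral_cong)
    fix xs assume xs: "xs \<in> space ?P"
    have "?swap xs \<in> E a \<longleftrightarrow> (\<forall>b\<in>{..<N}. g (xs c) \<le> g (xs (?\<tau> b)))"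
      using assms(4) by (simp add: E_def)
    also have "\<dots> \<longleftrightarrow> xs \<in> E c"
      using Ball_image_comp[of ?\<tau> "{..<N}" "\<lambda>b. g (xs c) \<le> g (xs b)"]
      by (simp add: E_def comp_def permutes_image[OF swap])
    finally show "h (?swap xs) * indicator (E a) (?swap xs) = h xs * indicator (E c) xs"
      using sym[OF swap xs] by (simp split: split_indicator)
  qed
  finally show ?thesis
    by (simp only: E_def)
qed

lemma nn_integral_symmetric_eq_minimal_last:
  fixes g :: "'a \<Rightarrow> real"
  assumes [measurable]: "g \<in> borel_measurable M"
    and null: "\<And>c. {y \<in> space M. g y = c} \<in> null_sets M"
    and [measurable]: "h \<in> borel_measurable (PiM {..<Suc K} (\<lambda>_. M))"
    and sym: "\<And>p xs. p permutes {..<Suc K} \<Longrightarrow> xs \<in> space (PiM {..<Suc K} (\<lambda>_. M)) \<Longrightarrow>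
        h (\<lambda>i\<in>{..<Suc K}. xs (p i)) = h xs"
  shows "(\<integral>\<^sup>+xs. h xs \<partial>PiM {..<Suc K} (\<lambda>_. M)) = of_nat (Suc K) *
    (\<integral>\<^sup>+xs. h xs * indicator {xs. \<forall>b\<in>{..<Suc K}. g (xs K) \<le> g (xs b)} xs \<partial>PiM {..<Suc K} (\<lambda>_. M))"
proof -
  let ?P = "PiM {..<Suc K} (\<lambda>_. M)"
  define E where "E a = {xs. \<forall>b\<in>{..<Suc K}. g (xs a) \<le> g (xs b)}" for a
  have [measurable]: "(\<lambda>xs. h xs * indicator (E a) xs) \<in> borel_measurable ?P" if "a < Suc K" for a
    using pred_PiM_minimal_at[OF assms(1) that] unfolding E_def by measurable
  have "AE xs in ?P. (\<Sum>a<Suc K. indicator (E a) xs :: ennreal) = 1"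
    using AE_PiM_unique_argmin[OF zero_less_Suc assms(1) null]
  proof eventually_elim
    case (elim xs)
    then obtain a where "a < Suc K" and argmin: "\<forall>a'<Suc K. xs \<in> E a' \<longleftrightarrow> a' = a"
      by (auto simp: E_def)
    then have "(\<Sum>a'<Suc K. indicator (E a') xs :: ennreal) = (\<Sum>a'<Suc K. if a' = a then 1 else 0)"
      by (intro sum.cong) (auto simp: indicator_def)
    with \<open>a < Suc K\<close> show ?case
      by simp
  qed
  then have "(\<integral>\<^sup>+xs. h xs \<partial>?P) = (\<integral>\<^sup>+xs. (\<Sum>a<Suc K. h xs * indicator (E a) xs) \<partial>?P)"
    by (intro nn_integral_cong_AE) (auto simp: sum_distrib_left[symmetric] elim!: eventually_mono)
  also have "\<dots> = (\<Sum>a<Suc K. \<integral>\<^sup>+xs. h xs * indicator (E a) xs \<partial>?P)"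
    by (intro nn_integral_sum) auto
  also have "\<dots> = (\<Sum>a<Suc K. \<integral>\<^sup>+xs. h xs * indicator (E K) xs \<partial>?P)"
    unfolding E_def using sym by (intro sum.cong refl nn_integral_symmetric_minimal_at_eq) auto
  finally show ?thesis
    by (simp add: E_def)
qed

lemma nn_integral_symmetric_split_minimal:
  fixes g :: "'a \<Rightarrow> real"
  assumes [measurable]: "g \<in> borel_measurable M"
    and null: "\<And>c. {y \<in> space M. g y = c} \<in> null_sets M"
    and [measurable]: "h \<in> borel_measurable (PiM {..<Suc K} (\<lambda>_. M))"
    and sym: "\<And>p xs. p permutes {..<Suc K} \<Longrightarrow> xs \<in> space (PiM {..<Suc K} (\<lambda>_. M)) \<Longrightarrow>
        h (\<lambda>i\<in>{..<Suc K}. xs (p i)) = h xs"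
  shows "(\<integral>\<^sup>+xs. h xs \<partial>PiM {..<Suc K} (\<lambda>_. M)) = of_nat (Suc K) *
    (\<integral>\<^sup>+x. \<integral>\<^sup>+ys. h (ys(K := x)) * indicator {ys. \<forall>i\<in>{..<K}. g x \<le> g (ys i)} ys \<partial>PiM {..<K} (\<lambda>_. M) \<partial>M)"
proof -
  interpret product_sigma_finite "\<lambda>_::nat. M"
    by (simp add: product_sigma_finite_def sigma_finite_measure_axioms)
  let ?E = "{xs. \<forall>b\<in>{..<Suc K}. g (xs K) \<le> g (xs b)}"
  have "(\<lambda>xs. h xs * indicator ?E xs) \<in> borel_measurable (PiM {..<Suc K} (\<lambda>_. M))"
    using pred_PiM_minimal_at[OF assms(1), of K "Suc K"] by measurable
  then have "(\<integral>\<^sup>+xs. h xs * indicator ?E xs \<partial>PiM {..<Suc K} (\<lambda>_. M)) =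
      (\<integral>\<^sup>+x. \<integral>\<^sup>+ys. h (ys(K := x)) * indicator ?E (ys(K := x)) \<partial>PiM {..<K} (\<lambda>_. M) \<partial>M)"
    unfolding lessThan_Suc by (intro product_nn_integral_insert_rev) auto
  also have "\<dots> = (\<integral>\<^sup>+x. \<integral>\<^sup>+ys. h (ys(K := x)) * indicator {ys. \<forall>i\<in>{..<K}. g x \<le> g (ys i)} ys
      \<partial>PiM {..<K} (\<lambda>_. M) \<partial>M)"
    by (intro nn_integral_cong) (auto simp: indicator_def lessThan_Suc)
  finally show ?thesis
    using nn_integral_symmetric_eq_minimal_last[OF assms(1-3)] sym by simp
qed

end

section \<open>A logarithmic integral identity\<close>

lemma sums_ln_one_plus:
  fixes a :: real
  assumes "0 \<le> a"
  shows "(\<lambda>m. (a / (1 + a)) ^ Suc m / Suc m) sums ln (1 + a)"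
proof -
  have "(\<lambda>n. - ((a / (1 + a)) ^ n) / n) sums ln (1 - a / (1 + a))"
    using ln_series'[of "- a / (1 + a)"] assms by simp
  then have "(\<lambda>n. (a / (1 + a)) ^ n / n) sums ln (1 + a)"
    using sums_minus assms by (fastforce simp: field_simps ln_div)
  then show ?thesis
    by (subst sums_Suc_iff) simp
qed

lemma sums_div_one_plus_diff:
  fixes a b c :: real
  assumes "0 \<le> b" "b \<le> a"
  shows "(\<lambda>m. c * b ^ m / (1 + a) ^ Suc m) sums (c / (1 + (a - b)))"
proof -
  have "norm (b / (1 + a)) < 1"
    using assms by simp
  note geometric = sums_mult[OF geometric_sums[OF this], of "c / (1 + a)"]
  have term_eq: "c / (1 + a) * (b / (1 + a)) ^ m = c * b ^ m / (1 + a) ^ Suc m" for m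
    by (simp add: power_divide)
  have "1 - b / (1 + a) = (1 + (a - b)) / (1 + a)"
    using assms by (simp add: field_simps)
  then have sum_eq: "c / (1 + a) * (1 / (1 - b / (1 + a))) = c / (1 + (a - b))"
    using assms by simp
  from geometric show ?thesis
    unfolding term_eq sum_eq .
qed

definition lower_mass :: "'a measure \<Rightarrow> ('a \<Rightarrow> real) \<Rightarrow> ('a \<Rightarrow> real) \<Rightarrow> real \<Rightarrow> real" where
  "lower_mass M f g t = (\<integral>y. f y * indicator {y. g y \<le> t} y \<partial>M)"

context sigma_finite_measure
begin

context
  fixes f g :: "'a \<Rightarrow> real"
  assumes f_measurable [measurable]: "f \<in> borel_measurable M"
    and g_measurable [measurable]: "g \<in> borel_measurable M"
    and f_nonneg: "\<And>x. 0 \<le> f x" and f_integrable: "integrable M f"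
    and null_level_sets: "\<And>c. {y \<in> space M. g y = c} \<in> null_sets M"
begin

lemma integrable_mult_indicator_level:
  "integrable M (\<lambda>y. f y * indicator {y. g y \<le> t} y)" "integrable M (\<lambda>y. f y * indicator {y. t \<le> g y} y)"
  using f_nonneg by (auto intro!: Bochner_Integration.integrable_bound[OF f_integrable] simp: indicator_def)

lemma lower_mass_nonneg: "0 \<le> lower_mass M f g t"
  unfolding lower_mass_def using f_nonneg by (simp add: Bochner_Integration.integral_nonneg)

lemma lower_mass_le_integral: "lower_mass M f g t \<le> (\<integral>y. f y \<partial>M)"
  unfolding lower_mass_def using f_nonneg integrable_mult_indicator_level f_integrable
  by (intro Bochner_Integration.integral_mono) (auto simp: indicator_def)

lemma borel_measurable_lower_mass [measurable]: "lower_mass M f g \<in> borel_measurable borel"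
proof (rule borel_measurable_mono)
  show "mono (lower_mass M f g)"
    unfolding lower_mass_def mono_def using f_nonneg integrable_mult_indicator_level
    by (auto intro!: Bochner_Integration.integral_mono simp: indicator_def)
qed

lemma integral_upper_mass: "(\<integral>y. f y * indicator {y. t \<le> g y} y \<partial>M) = (\<integral>y. f y \<partial>M) - lower_mass M f g t"
proof -
  have "AE y in M. f y * indicator {y. t \<le> g y} y = f y - f y * indicator {y. g y \<le> t} y"
    using AE_not_in[OF null_level_sets[of t]] AE_space by eventually_elim (auto simp: indicator_def)
  then show ?thesis
    unfolding lower_mass_def using integrable_mult_indicator_level f_integrable
    by (subst integral_cong_AE[where g = "\<lambda>y. f y - f y * indicator {y. g y \<le> t} y"]) auto
qed

lemma nn_integral_times_lower_mass_power:
  "(\<integral>\<^sup>+x. ennreal (f x * lower_mass M f g (g x) ^ m) \<partial>M) = ennreal ((\<integral>y. f y \<partial>M) ^ Suc m / Suc m)"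
proof -
  define h where "h xs = (\<Prod>i<Suc m. ennreal (f (xs i)))" for xs :: "nat \<Rightarrow> 'a"
  define I where "I = (\<integral>\<^sup>+x. \<integral>\<^sup>+ys. h (ys(m := x)) * indicator {ys. \<forall>i\<in>{..<m}. - g x \<le> - g (ys i)} ys
      \<partial>PiM {..<m} (\<lambda>_. M) \<partial>M)"
  have lhs_eq: "(\<integral>\<^sup>+x. ennreal (f x * lower_mass M f g (g x) ^ m) \<partial>M) = I"
    unfolding I_def
  proof (rule nn_integral_cong)
    fix x
    have "ennreal (f x * lower_mass M f g (g x) ^ m) = (\<integral>\<^sup>+ys. ennreal (f x) *
        (\<Prod>i<m. ennreal (f (ys i) * indicator {y. g y \<le> g x} (ys i))) \<partial>PiM {..<m} (\<lambda>_. M))"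
      using f_nonneg integrable_mult_indicator_level
      by (simp add: lower_mass_def ennreal_mult Bochner_Integration.integral_nonneg nn_integral_cmult
          ennreal_integral_power_eq_nn_integral_PiM)
    also have "\<dots> = (\<integral>\<^sup>+ys. h (ys(m := x)) * indicator {ys. \<forall>i\<in>{..<m}. - g x \<le> - g (ys i)} ys
        \<partial>PiM {..<m} (\<lambda>_. M))"
      using f_nonneg
      by (intro nn_integral_cong)
         (auto simp: ennreal_mult prod_mult_indicator h_def lessThan_Suc mult_ac indicator_def)
    finally show "ennreal (f x * lower_mass M f g (g x) ^ m) = \<dots>" .
  qed
  have "of_nat (Suc m) * I = (\<integral>\<^sup>+xs. h xs \<partial>PiM {..<Suc m} (\<lambda>_. M))"
    unfolding I_def
  proof (rule nn_integral_symmetric_split_minimal[symmetric])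
    have "{y \<in> space M. - g y = c} = {y \<in> space M. g y = - c}" for c
      by auto
    then show "{y \<in> space M. - g y = c} \<in> null_sets M" for c
      using null_level_sets by simp
    show "h (\<lambda>i\<in>{..<Suc m}. xs (p i)) = h xs" if "p permutes {..<Suc m}" for p xs
      using prod.permute[OF that, of "\<lambda>i. ennreal (f (xs i))"] by (simp add: h_def comp_def)
  qed (simp_all add: h_def)
  also have "\<dots> = ennreal ((\<integral>y. f y \<partial>M) ^ Suc m)"
    by (simp only: h_def ennreal_integral_power_eq_nn_integral_PiM[OF f_measurable f_nonneg f_integrable])
  moreover have "ennreal (1 / Suc m) * of_nat (Suc m) = 1"
    by (subst ennreal_of_nat_eq_real_of_nat) (simp add: ennreal_mult[symmetric] del: of_nat_Suc)
  ultimately have "I = ennreal (1 / Suc m) * ennreal ((\<integral>y. f y \<partial>M) ^ Suc m)"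
    by (metis mult.assoc mult_1)
  with lhs_eq show ?thesis
    using f_nonneg by (simp add: ennreal_mult[symmetric] Bochner_Integration.integral_nonneg)
qed

lemma nn_integral_div_one_plus_mass_gap:
  "(\<integral>\<^sup>+x. ennreal (f x / (1 + ((\<integral>y. f y \<partial>M) - lower_mass M f g (g x)))) \<partial>M)
    = ennreal (ln (1 + (\<integral>y. f y \<partial>M)))"
proof -
  define A where "A = (\<integral>y. f y \<partial>M)"
  have A_nonneg: "0 \<le> A"
    unfolding A_def using f_nonneg by (simp add: Bochner_Integration.integral_nonneg)
  note expand = sums_div_one_plus_diff[OF lower_mass_nonneg lower_mass_le_integral[folded A_def]]
  have moment: "(\<integral>\<^sup>+x. ennreal (f x * lower_mass M f g (g x) ^ m / (1 + A) ^ Suc m) \<partial>M)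
      = ennreal ((A / (1 + A)) ^ Suc m / Suc m)" for m
  proof -
    have "(\<integral>\<^sup>+x. ennreal (f x * lower_mass M f g (g x) ^ m / (1 + A) ^ Suc m) \<partial>M)
        = ennreal (1 / (1 + A) ^ Suc m) * (\<integral>\<^sup>+x. ennreal (f x * lower_mass M f g (g x) ^ m) \<partial>M)"
      using f_nonneg lower_mass_nonneg A_nonneg
      by (subst nn_integral_cmult[symmetric]) (auto intro!: nn_integral_cong simp: ennreal_mult[symmetric])
    then show ?thesis
      using A_nonneg
      by (simp add: nn_integral_times_lower_mass_power A_def[symmetric] ennreal_mult[symmetric] power_divide)
  qed
  have "(\<integral>\<^sup>+x. ennreal (f x / (1 + (A - lower_mass M f g (g x)))) \<partial>M)
      = (\<integral>\<^sup>+x. (\<Sum>m. ennreal (f x * lower_mass M f g (g x) ^ m / (1 + A) ^ Suc m)) \<partial>M)"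
  proof (rule nn_integral_cong)
    fix x
    have "(\<Sum>m. ennreal (f x * lower_mass M f g (g x) ^ m / (1 + A) ^ Suc m))
        = ennreal (\<Sum>m. f x * lower_mass M f g (g x) ^ m / (1 + A) ^ Suc m)"
      using f_nonneg lower_mass_nonneg A_nonneg by (intro suminf_ennreal2 sums_summable[OF expand]) simp
    then show "ennreal (f x / (1 + (A - lower_mass M f g (g x))))
        = (\<Sum>m. ennreal (f x * lower_mass M f g (g x) ^ m / (1 + A) ^ Suc m))"
      using sums_unique[OF expand] by simp
  qed
  also have "\<dots> = (\<Sum>m. \<integral>\<^sup>+x. ennreal (f x * lower_mass M f g (g x) ^ m / (1 + A) ^ Suc m) \<partial>M)"
    by (rule nn_integral_suminf) measurable
  also have "\<dots> = ennreal (ln (1 + A))"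
    unfolding moment using sums_ln_one_plus[OF A_nonneg] A_nonneg
    by (simp add: suminf_ennreal2 sums_summable sums_unique[symmetric])
  finally show ?thesis
    by (simp only: A_def)
qed

lemma integral_div_one_plus_upper_mass:
  "(\<integral>x. f x / (1 + (\<integral>y. f y * indicator {y. g x \<le> g y} y \<partial>M)) \<partial>M) = ln (1 + (\<integral>y. f y \<partial>M))"
proof -
  have "(\<integral>x. f x / (1 + ((\<integral>y. f y \<partial>M) - lower_mass M f g (g x))) \<partial>M) = ln (1 + (\<integral>y. f y \<partial>M))"
    using nn_integral_div_one_plus_mass_gap f_nonneg lower_mass_le_integral
    by (subst integral_eq_nn_integral) (auto intro!: divide_nonneg_pos add_pos_nonneg)
  then show ?thesis
    by (simp add: integral_upper_mass)
qed

end

end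

section \<open>Janossy integrals of bounded activities\<close>

lemma sets_lebk [measurable_cong]: "sets (lebk k) = sets (PiM {..<k} (\<lambda>_. lborel))"
  by (simp add: lebk_def)

lemma space_lebk: "space (lebk k) = PiE {..<k} (\<lambda>_. UNIV)"
  by (simp add: lebk_def space_PiM)

lemma borel_measurable_gibbs_weight [measurable]:
  assumes [measurable]: "\<phi> \<in> borel_measurable borel"
  shows "gibbs_weight \<phi> k \<in> borel_measurable (lebk k)"
  unfolding gibbs_weight_def by measurable

interpretation lborel_power: product_sigma_finite "\<lambda>_::'i. lborel :: 'a::euclidean_space measure"
  by (simp add: product_sigma_finite_def lborel.sigma_finite_measure_axioms)

lemma janossy_int_0 [simp]: "janossy_int \<phi> lam 0 (\<lambda>_ _. 1) = 1"
  by (simp add: janossy_int_def gibbs_weight_def lebk_def PiM_empty)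

lemma one_point_density_eq_Z_act:
  "one_point_density \<phi> lam v = lam v * Z_act \<phi> (\<lambda>y. lam y * boltz \<phi> (v - y)) / Z_act \<phi> lam"
  unfolding one_point_density_def gibbs_expect_def Z_act_def janossy_int_def
  by (simp add: prod.distrib mult_ac)

locale repulsive_potential =
  fixes \<phi> :: "real^'d \<Rightarrow> ereal"
  assumes potential_measurable [measurable]: "\<phi> \<in> borel_measurable borel"
    and potential_nonneg: "\<And>x. 0 \<le> \<phi> x"

locale bounded_activity = repulsive_potential \<phi> for \<phi> :: "real^'d \<Rightarrow> ereal" +
  fixes lam :: "real^'d \<Rightarrow> real" and c :: real and S :: "(real^'d) set"
  assumes activity_measurable [measurable]: "lam \<in> borel_measurable borel"
    and activity_nonneg: "\<And>y. 0 \<le> lam y"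
    and activity_le: "\<And>y. lam y \<le> c * indicator S y"
    and support_sets [measurable]: "S \<in> sets borel"
    and support_finite: "emeasure lborel S < \<infinity>"
begin

lemma janossy_integrand_nonneg: "0 \<le> (\<Prod>i<k. lam (xs i)) * gibbs_weight \<phi> k xs"
  using activity_nonneg gibbs_weight_nonneg by (intro mult_nonneg_nonneg prod_nonneg) auto

lemma janossy_integrand_le:
  "(\<Prod>i<k. lam (xs i)) * gibbs_weight \<phi> k xs \<le> (\<Prod>i<k. c * indicator S (xs i))"
proof -
  have "(\<Prod>i<k. lam (xs i)) * gibbs_weight \<phi> k xs \<le> (\<Prod>i<k. lam (xs i))"
    using gibbs_weight_le_1[of \<phi>, OF potential_nonneg] gibbs_weight_nonneg activity_nonneg
    by (intro mult_left_le) (auto intro: prod_nonneg)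
  also have "\<dots> \<le> (\<Prod>i<k. c * indicator S (xs i))"
    using activity_nonneg activity_le by (intro prod_mono) auto
  finally show ?thesis .
qed

lemma integrable_janossy_bound: "integrable (lebk k) (\<lambda>xs. \<Prod>i<k. c * indicator S (xs i))"
  unfolding lebk_def using support_finite
  by (intro lborel_power.product_integrable_prod) (auto simp: top.not_eq_extremum)

lemma integrable_janossy_integrand:
  "integrable (lebk k) (\<lambda>xs. (\<Prod>i<k. lam (xs i)) * gibbs_weight \<phi> k xs)"
proof (rule Bochner_Integration.integrable_bound[OF integrable_janossy_bound])
  show "AE xs in lebk k.
      norm ((\<Prod>i<k. lam (xs i)) * gibbs_weight \<phi> k xs) \<le> norm (\<Prod>i<k. c * indicator S (xs i))"
    using janossy_integrand_nonneg janossy_integrand_le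
    by (intro AE_I2) (metis abs_ge_self abs_of_nonneg order_trans real_norm_def)
qed measurable

lemma janossy_int_nonneg: "0 \<le> janossy_int \<phi> lam k (\<lambda>_ _. 1)"
  unfolding janossy_int_def using janossy_integrand_nonneg
  by (intro Bochner_Integration.integral_nonneg) simp

lemma janossy_int_le: "janossy_int \<phi> lam k (\<lambda>_ _. 1) \<le> (c * measure lborel S) ^ k"
proof -
  have "janossy_int \<phi> lam k (\<lambda>_ _. 1) \<le> (\<integral>xs. (\<Prod>i<k. c * indicator S (xs i)) \<partial>lebk k)"
    unfolding janossy_int_def using janossy_integrand_le
    by (simp add: Bochner_Integration.integral_mono integrable_janossy_integrand integrable_janossy_bound)
  also have "\<dots> = (c * measure lborel S) ^ k"
    unfolding lebk_def using support_finite
    by (subst lborel_power.product_integral_prod) (auto simp: top.not_eq_extremum)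
  finally show ?thesis .
qed

lemma summable_janossy_int: "summable (\<lambda>k. janossy_int \<phi> lam k (\<lambda>_ _. 1) / fact k)"
proof (rule summable_comparison_test')
  show "summable (\<lambda>k. (c * measure lborel S) ^ k / fact k)"
    using summable_exp_generic[of "c * measure lborel S"] by (simp add: field_simps)
  show "norm (janossy_int \<phi> lam k (\<lambda>_ _. 1) / fact k) \<le> (c * measure lborel S) ^ k / fact k" for k
    using janossy_int_nonneg janossy_int_le by (simp add: divide_right_mono)
qed

lemma Z_act_eq_suminf: "Z_act \<phi> lam = (\<Sum>k. janossy_int \<phi> lam k (\<lambda>_ _. 1) / fact k)"
  using suminf_split_head[OF summable_janossy_int] by (simp add: Z_act_def)

lemma Z_act_ge_1: "1 \<le> Z_act \<phi> lam"
  unfolding Z_act_def le_add_same_cancel1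
proof (rule suminf_nonneg)
  show "summable (\<lambda>k. janossy_int \<phi> lam (Suc k) (\<lambda>_ _. 1) / fact (Suc k))"
    using summable_janossy_int by (subst summable_Suc_iff)
qed (simp add: janossy_int_nonneg)

lemma Z_act_le_exp: "Z_act \<phi> lam \<le> exp (c * measure lborel S)"
proof -
  have "Z_act \<phi> lam \<le> (\<Sum>k. (c * measure lborel S) ^ k / fact k)"
    unfolding Z_act_eq_suminf
    using summable_janossy_int summable_exp_generic[of "c * measure lborel S"] janossy_int_le
    by (intro suminf_le) (auto simp: divide_right_mono field_simps)
  then show ?thesis
    by (simp add: exp_def field_simps)
qed

end

section \<open>Half-space activities on the cube\<close>

lemma cube_eq_cbox: "cube n = cbox (\<chi> i. - real n) (\<chi> i. real n :: real^'d)"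
  by (auto simp: cube_def mem_box_cart)

lemma sets_cube [measurable]: "cube n \<in> sets borel"
  by (simp add: cube_eq_cbox)

lemma emeasure_cube_finite: "emeasure lborel (cube n :: (real^'d) set) < \<infinity>"
  unfolding cube_eq_cbox by (rule emeasure_lborel_cbox_finite)

lemma null_sets_coordinate_hyperplane: "{y::real^'d. y $ j = c} \<in> null_sets lborel"
proof -
  have "negligible {y::real^'d. y \<bullet> axis j 1 = c}"
    by (rule negligible_standard_hyperplane) simp
  then show ?thesis
    by (simp add: cart_eq_inner_axis negligible_iff_null_sets null_sets_completion_iff)
qed

declare borel_measurable_nth [measurable]

lemma borel_measurable_act_t [measurable]:
  assumes [measurable]: "f \<in> borel_measurable M" "g \<in> borel_measurable M"
  shows "(\<lambda>p. act_t l n j (f p) (g p)) \<in> borel_measurable M"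
  unfolding act_t_def by measurable

lemma act_t_nonneg: "0 \<le> l \<Longrightarrow> 0 \<le> act_t l n j t y"
  by (simp add: act_t_def)

lemma act_t_le: "0 \<le> l \<Longrightarrow> act_t l n j t y \<le> l * indicator (cube n) y"
  by (simp add: act_t_def indicator_def)

lemma act_t_cube_bottom: "act_t l n j (- real n) = (\<lambda>y. l * indicator (cube n) y)"
  by (auto simp: act_t_def cube_def indicator_def fun_eq_iff)

lemma act_t_eq_mult_indicator: "act_t l n j t x = act_t l n j (- real n) x * indicator {y. t \<le> y $ j} x"
  by (auto simp: act_t_def cube_def indicator_def)

lemma Z_vol_eq_Z_act:
  fixes \<phi> :: "real^'d \<Rightarrow> ereal" and j :: 'd
  shows "Z_vol \<phi> (cube n) l = Z_act \<phi> (act_t l n j (- real n))"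
proof -
  have "(\<Prod>i<k. act_t l n j (- real n) (xs i)) = l ^ k * indicator (PiE {..<k} (\<lambda>_. cube n)) xs"
    if "xs \<in> space (lebk k)" for k and xs :: "nat \<Rightarrow> real^'d"
    using that by (auto simp: act_t_cube_bottom prod.distrib indicator_def space_lebk PiE_iff prod_zero_iff)
  then have "janossy_int \<phi> (act_t l n j (- real n)) k (\<lambda>_ _. 1) =
      l ^ k * (\<integral>xs. indicator (PiE {..<k} (\<lambda>_. cube n)) xs * gibbs_weight \<phi> k xs \<partial>lebk k)" for k
    unfolding janossy_int_def integral_mult_right_zero[symmetric]
    by (intro Bochner_Integration.integral_cong) simp_all
  then show ?thesis
    by (simp add: Z_vol_def Z_act_def del: power_Suc)
qed

locale cube_halfspace_activities = repulsive_potential \<phi> for \<phi> :: "real^'d \<Rightarrow> ereal" +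
  fixes l :: real and n :: nat and j :: 'd
  assumes potential_symmetric: "\<And>x. \<phi> (- x) = \<phi> x"
    and activity_nonneg: "0 \<le> l"
begin

text \<open>The activity seen by the other points of a configuration whose lowest point in direction
  \<open>j\<close> sits at \<open>x\<close>.\<close>

definition pinned_act :: "real^'d \<Rightarrow> real^'d \<Rightarrow> real" where
  "pinned_act x y = act_t l n j (x $ j) y * boltz \<phi> (x - y)"

lemma bounded_activity_act_t: "bounded_activity \<phi> (act_t l n j t) l (cube n)"
proof unfold_locales
  show "emeasure lborel (cube n) < \<infinity>"
    by (rule emeasure_cube_finite)
qed (simp_all add: act_t_nonneg act_t_le activity_nonneg)

lemma borel_measurable_pinned_act [measurable]: "pinned_act x \<in> borel_measurable borel"
  unfolding pinned_act_def by measurable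

lemma bounded_activity_pinned_act: "bounded_activity \<phi> (pinned_act x) l (cube n)"
proof unfold_locales
  show "pinned_act x y \<le> l * indicator (cube n) y" for y
    unfolding pinned_act_def
    using act_t_le[OF activity_nonneg] act_t_nonneg[OF activity_nonneg] boltz_le_1[of \<phi>, OF potential_nonneg]
    by (meson boltz_nonneg mult_left_le order_trans)
  show "emeasure lborel (cube n) < \<infinity>"
    by (rule emeasure_cube_finite)
qed (simp_all add: pinned_act_def act_t_nonneg activity_nonneg)

lemma borel_measurable_janossy_pinned [measurable]:
  "(\<lambda>x. janossy_int \<phi> (pinned_act x) k (\<lambda>_ _. 1)) \<in> borel_measurable borel"
proof -
  interpret sigma_finite_measure "lebk k :: (nat \<Rightarrow> real^'d) measure"
    unfolding lebk_def by (rule lborel_power.sigma_finite) simp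
  have "(\<lambda>(x, ys). (\<Prod>i<k. pinned_act x (ys i)) * gibbs_weight \<phi> k ys * 1)
      \<in> borel_measurable (lborel \<Otimes>\<^sub>M lebk k)"
    unfolding pinned_act_def lebk_def by measurable
  then have "(\<lambda>x. \<integral>ys. (\<Prod>i<k. pinned_act x (ys i)) * gibbs_weight \<phi> k ys * 1 \<partial>lebk k)
      \<in> borel_measurable lborel"
    by (rule borel_measurable_lebesgue_integral)
  then show ?thesis
    by (simp add: janossy_int_def)
qed

lemma integrable_act_t_mult:
  assumes [measurable]: "g \<in> borel_measurable borel" and bound: "\<And>x. \<bar>g x\<bar> \<le> B"
  shows "integrable lborel (\<lambda>x. act_t l n j t x * g x)"
proof (rule Bochner_Integration.integrable_bound)
  show "integrable lborel (\<lambda>x. l * B * indicator (cube n) x :: real)"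
    using emeasure_cube_finite by (intro integrable_mult_right integrable_real_indicator) auto
  show "AE x in lborel. norm (act_t l n j t x * g x) \<le> norm (l * B * indicator (cube n) x :: real)"
  proof (intro AE_I2)
    fix x
    have "\<bar>act_t l n j t x * g x\<bar> = act_t l n j t x * \<bar>g x\<bar>"
      using act_t_nonneg[OF activity_nonneg, of n j t x] by (simp add: abs_mult)
    also have "\<dots> \<le> l * indicator (cube n) x * B"
      using act_t_nonneg[OF activity_nonneg] act_t_le[OF activity_nonneg] bound activity_nonneg
      by (intro mult_mono) auto
    finally have "\<bar>act_t l n j t x * g x\<bar> \<le> l * indicator (cube n) x * B" .
    then show "norm (act_t l n j t x * g x) \<le> norm (l * B * indicator (cube n) x :: real)"
      by (simp add: mult_ac)
  qed
qed measurable

lemma janossy_int_pinned_nonneg: "0 \<le> janossy_int \<phi> (pinned_act x) k (\<lambda>_ _. 1)"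
  by (rule bounded_activity.janossy_int_nonneg[OF bounded_activity_pinned_act])

lemma janossy_int_pinned_le:
  "janossy_int \<phi> (pinned_act x) k (\<lambda>_ _. 1) \<le> (l * measure lborel (cube n :: (real^'d) set)) ^ k"
  by (rule bounded_activity.janossy_int_le[OF bounded_activity_pinned_act])

lemma janossy_integrand_fun_upd:
  "(\<Prod>i<Suc k. act_t l n j t ((ys(k := x)) i)) * gibbs_weight \<phi> (Suc k) (ys(k := x)) *
      indicator {ys. \<forall>i\<in>{..<k}. x $ j \<le> ys i $ j} ys
    = act_t l n j t x * ((\<Prod>i<k. pinned_act x (ys i)) * gibbs_weight \<phi> k ys)"
proof (cases "act_t l n j t x = 0")
  case False
  then have "act_t l n j t y * indicator {y. x $ j \<le> y $ j} y = act_t l n j (x $ j) y" for y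
    by (auto simp: act_t_def indicator_def)
  then have "(\<Prod>i<k. act_t l n j t (ys i)) * indicator {ys. \<forall>i\<in>{..<k}. x $ j \<le> ys i $ j} ys
      = (\<Prod>i<k. act_t l n j (x $ j) (ys i))"
    using prod_mult_indicator[of "{..<k}" "\<lambda>i. act_t l n j t (ys i)" "{y. x $ j \<le> y $ j}" ys]
    by (simp add: prod.distrib[symmetric] cong: prod.cong)
  moreover have "(\<Prod>i<k. boltz \<phi> (ys i - x)) = (\<Prod>i<k. boltz \<phi> (x - ys i))"
    using boltz_diff_commute[of \<phi>, OF potential_symmetric] by simp
  ultimately show ?thesis
    by (simp add: gibbs_weight_fun_upd pinned_act_def prod.distrib lessThan_Suc mult_ac)
qed (simp add: lessThan_Suc)

lemma nn_integral_janossy_integrand_fun_upd: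
  "(\<integral>\<^sup>+ys. ennreal ((\<Prod>i<Suc k. act_t l n j t ((ys(k := x)) i)) * gibbs_weight \<phi> (Suc k) (ys(k := x))) *
      indicator {ys. \<forall>i\<in>{..<k}. x $ j \<le> ys i $ j} ys \<partial>lebk k)
    = ennreal (act_t l n j t x * janossy_int \<phi> (pinned_act x) k (\<lambda>_ _. 1))"
  (is "(\<integral>\<^sup>+ys. ennreal (?F ys) * indicator ?S ys \<partial>lebk k) = _")
proof -
  interpret pinned: bounded_activity \<phi> "pinned_act x" l "cube n"
    by (rule bounded_activity_pinned_act)
  let ?pinned = "\<lambda>ys. (\<Prod>i<k. pinned_act x (ys i)) * gibbs_weight \<phi> k ys"
  have "ennreal (?F ys) * indicator ?S ys = ennreal (act_t l n j t x) * ennreal (?pinned ys)" for ys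
  proof -
    have "ennreal (?F ys) * indicator ?S ys = ennreal (?F ys * indicator ?S ys)"
      by (simp add: indicator_def)
    also have "\<dots> = ennreal (act_t l n j t x * ?pinned ys)"
      by (simp only: janossy_integrand_fun_upd)
    also have "\<dots> = ennreal (act_t l n j t x) * ennreal (?pinned ys)"
      by (rule ennreal_mult[OF act_t_nonneg[OF activity_nonneg] pinned.janossy_integrand_nonneg])
    finally show ?thesis .
  qed
  then have "(\<integral>\<^sup>+ys. ennreal (?F ys) * indicator ?S ys \<partial>lebk k)
      = (\<integral>\<^sup>+ys. ennreal (act_t l n j t x) * ennreal (?pinned ys) \<partial>lebk k)"
    by simp
  also have "\<dots> = ennreal (act_t l n j t x) * ennreal (janossy_int \<phi> (pinned_act x) k (\<lambda>_ _. 1))"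
    using pinned.integrable_janossy_integrand pinned.janossy_integrand_nonneg
    by (simp add: nn_integral_cmult nn_integral_eq_integral janossy_int_def)
  also have "\<dots> = ennreal (act_t l n j t x * janossy_int \<phi> (pinned_act x) k (\<lambda>_ _. 1))"
    by (rule ennreal_mult[symmetric, OF act_t_nonneg[OF activity_nonneg] pinned.janossy_int_nonneg])
  finally show ?thesis .
qed

lemma janossy_int_Suc_act_t:
  "janossy_int \<phi> (act_t l n j t) (Suc k) (\<lambda>_ _. 1) =
    Suc k * (\<integral>x. act_t l n j t x * janossy_int \<phi> (pinned_act x) k (\<lambda>_ _. 1) \<partial>lborel)"
proof -
  interpret act: bounded_activity \<phi> "act_t l n j t" l "cube n"
    by (rule bounded_activity_act_t)
  define h where "h xs = (\<Prod>i<Suc k. act_t l n j t (xs i)) * gibbs_weight \<phi> (Suc k) xs" for xs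
  let ?J = "\<lambda>x. janossy_int \<phi> (pinned_act x) k (\<lambda>_ _. 1)"
  have [measurable]: "h \<in> borel_measurable (lebk (Suc k))"
    unfolding h_def by measurable
  have "ennreal (janossy_int \<phi> (act_t l n j t) (Suc k) (\<lambda>_ _. 1)) = (\<integral>\<^sup>+xs. ennreal (h xs) \<partial>lebk (Suc k))"
    unfolding janossy_int_def h_def mult_1_right
    by (rule nn_integral_eq_integral[symmetric])
       (use act.integrable_janossy_integrand[of "Suc k"] act.janossy_integrand_nonneg[where k = "Suc k"]
         in auto)
  also have "\<dots> = of_nat (Suc k) * (\<integral>\<^sup>+x. \<integral>\<^sup>+ys. ennreal (h (ys(k := x))) *
      indicator {ys. \<forall>i\<in>{..<k}. x $ j \<le> ys i $ j} ys \<partial>lebk k \<partial>lborel)"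
    unfolding lebk_def
  proof (rule lborel.nn_integral_symmetric_split_minimal)
    show "{y \<in> space lborel. y $ j = c} \<in> null_sets lborel" for c :: real
      using null_sets_coordinate_hyperplane[of j c] by simp
    show "ennreal (h (\<lambda>i\<in>{..<Suc k}. xs (p i))) = ennreal (h xs)" if "p permutes {..<Suc k}" for p xs
      using janossy_integrand_permute[of \<phi>, OF potential_symmetric that] by (simp add: h_def)
  qed (simp_all add: lebk_def[symmetric])
  also have "\<dots> = of_nat (Suc k) * (\<integral>\<^sup>+x. ennreal (act_t l n j t x * ?J x) \<partial>lborel)"
    unfolding h_def nn_integral_janossy_integrand_fun_upd ..
  also have "\<dots> = of_nat (Suc k) * ennreal (\<integral>x. act_t l n j t x * ?J x \<partial>lborel)"
    using janossy_int_pinned_nonneg janossy_int_pinned_le act_t_nonneg[OF activity_nonneg]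
    by (intro arg_cong2[where f = "(*)"] nn_integral_eq_integral AE_I2 mult_nonneg_nonneg
        integrable_act_t_mult[of _ "(l * measure lborel (cube n :: (real^'d) set)) ^ k"]) auto
  moreover have "0 \<le> (\<integral>x. act_t l n j t x * ?J x \<partial>lborel)"
    by (intro Bochner_Integration.integral_nonneg mult_nonneg_nonneg janossy_int_pinned_nonneg
        act_t_nonneg activity_nonneg)
  ultimately show ?thesis
    using act.janossy_int_nonneg
    by (simp add: ennreal_of_nat_eq_real_of_nat ennreal_mult[symmetric] del: of_nat_Suc)
qed

lemma borel_measurable_Z_act_pinned [measurable]: "(\<lambda>x. Z_act \<phi> (pinned_act x)) \<in> borel_measurable borel"
  unfolding Z_act_def by measurable

lemma Z_act_pinned_bounds:
  "1 \<le> Z_act \<phi> (pinned_act x)"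
  "Z_act \<phi> (pinned_act x) \<le> exp (l * measure lborel (cube n :: (real^'d) set))"
  by (rule bounded_activity.Z_act_ge_1[OF bounded_activity_pinned_act]
      bounded_activity.Z_act_le_exp[OF bounded_activity_pinned_act])+

lemma Z_act_act_t_eq: "Z_act \<phi> (act_t l n j t) = 1 + (\<integral>x. act_t l n j t x * Z_act \<phi> (pinned_act x) \<partial>lborel)"
proof -
  interpret act: bounded_activity \<phi> "act_t l n j t" l "cube n"
    by (rule bounded_activity_act_t)
  define g where "g k x = act_t l n j t x * (janossy_int \<phi> (pinned_act x) k (\<lambda>_ _. 1) / fact k)" for k x
  have g_nonneg: "0 \<le> g k x" for k x
    unfolding g_def
    by (intro mult_nonneg_nonneg divide_nonneg_pos act_t_nonneg activity_nonneg janossy_int_pinned_nonneg) auto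
  have g_int: "integrable lborel (g k)" for k
    unfolding g_def using janossy_int_pinned_nonneg janossy_int_pinned_le
    by (intro integrable_act_t_mult[where B = "(l * measure lborel (cube n :: (real^'d) set)) ^ k / fact k"])
       (auto simp: divide_right_mono)
  have g_integral:
    "(\<integral>x. g k x \<partial>lborel) = janossy_int \<phi> (act_t l n j t) (Suc k) (\<lambda>_ _. 1) / fact (Suc k)" for k
    unfolding g_def janossy_int_Suc_act_t by (simp add: field_simps del: of_nat_Suc)
  have "(\<integral>x. (\<Sum>k. g k x) \<partial>lborel) = (\<Sum>k. \<integral>x. g k x \<partial>lborel)"
  proof (rule integral_suminf)
    show "AE x in lborel. summable (\<lambda>k. norm (g k x))"
    proof (rule AE_I2)
      fix x
      have "summable (\<lambda>k. g k x)"
        unfolding g_def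
        by (rule summable_mult[OF bounded_activity.summable_janossy_int[OF bounded_activity_pinned_act]])
      then show "summable (\<lambda>k. norm (g k x))"
        using g_nonneg by simp
    qed
    have "summable (\<lambda>k. janossy_int \<phi> (act_t l n j t) (Suc k) (\<lambda>_ _. 1) / fact (Suc k))"
      using act.summable_janossy_int by (subst summable_Suc_iff)
    then show "summable (\<lambda>k. \<integral>x. norm (g k x) \<partial>lborel)"
      using g_nonneg by (simp add: g_integral)
  qed (rule g_int)
  moreover have "(\<Sum>k. g k x) = act_t l n j t x * Z_act \<phi> (pinned_act x)" for x
    unfolding g_def bounded_activity.Z_act_eq_suminf[OF bounded_activity_pinned_act]
    by (rule suminf_mult[OF bounded_activity.summable_janossy_int[OF bounded_activity_pinned_act]])
  ultimately show ?thesis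
    by (simp add: Z_act_def g_integral)
qed

definition lowest_point_density :: "real^'d \<Rightarrow> real" where
  "lowest_point_density x = act_t l n j (- real n) x * Z_act \<phi> (pinned_act x)"

lemma borel_measurable_lowest_point_density [measurable]: "lowest_point_density \<in> borel_measurable borel"
  unfolding lowest_point_density_def[abs_def] by measurable

lemma lowest_point_density_nonneg: "0 \<le> lowest_point_density x"
  unfolding lowest_point_density_def using Z_act_pinned_bounds(1)[of x]
  by (simp add: act_t_nonneg activity_nonneg)

lemma integrable_lowest_point_density: "integrable lborel lowest_point_density"
  unfolding lowest_point_density_def[abs_def]
  using Z_act_pinned_bounds order_trans[OF zero_le_one Z_act_pinned_bounds(1)]
  by (intro integrable_act_t_mult[where B = "exp (l * measure lborel (cube n :: (real^'d) set))"]) auto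

lemma Z_act_act_t_eq_upper_mass:
  "Z_act \<phi> (act_t l n j t) = 1 + (\<integral>y. lowest_point_density y * indicator {y. t \<le> y $ j} y \<partial>lborel)"
  unfolding Z_act_act_t_eq lowest_point_density_def by (subst act_t_eq_mult_indicator) (simp add: mult_ac)

lemma Z_vol_eq_lowest_point_density: "Z_vol \<phi> (cube n) l = 1 + (\<integral>y. lowest_point_density y \<partial>lborel)"
  unfolding Z_vol_eq_Z_act[where j = j] Z_act_act_t_eq lowest_point_density_def ..

lemma one_point_density_act_t_eq:
  "indicator (cube n) x * one_point_density \<phi> (act_t l n j (x $ j)) x =
    lowest_point_density x / (1 + (\<integral>y. lowest_point_density y * indicator {y. x $ j \<le> y $ j} y \<partial>lborel))"
proof (cases "x \<in> cube n")
  case True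
  then have "lowest_point_density x = l * Z_act \<phi> (pinned_act x)"
    by (simp add: lowest_point_density_def act_t_cube_bottom)
  moreover have "one_point_density \<phi> (act_t l n j (x $ j)) x
      = l * Z_act \<phi> (pinned_act x) / Z_act \<phi> (act_t l n j (x $ j))"
    using True by (simp add: one_point_density_eq_Z_act pinned_act_def[abs_def] act_t_def)
  ultimately show ?thesis
    using True by (simp add: Z_act_act_t_eq_upper_mass)
qed (simp add: lowest_point_density_def act_t_cube_bottom)

end

theorem corollary17:
  fixes \<phi> :: "real^'d \<Rightarrow> ereal" and l :: real and n :: nat and j :: 'd
  assumes "\<phi> \<in> borel_measurable borel"
    and "\<forall>x. \<phi> (- x) = \<phi> x"
    and "\<forall>x. \<phi> x \<ge> 0"
    and "\<exists>R. \<forall>x. norm x > R \<longrightarrow> \<phi> x = 0"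
    and "l > 0"
  shows "ln (Z_vol \<phi> (cube n) l) =
         (\<integral>x\<in>cube n. one_point_density \<phi> (act_t l n j (x $ j)) x \<partial>lborel)"
proof -
  interpret cube_halfspace_activities \<phi> l n j
    using assms by unfold_locales auto
  have "ln (Z_vol \<phi> (cube n) l) = ln (1 + (\<integral>y. lowest_point_density y \<partial>lborel))"
    by (simp add: Z_vol_eq_lowest_point_density)
  also have "\<dots> = (\<integral>x. lowest_point_density x /
      (1 + (\<integral>y. lowest_point_density y * indicator {y. x $ j \<le> y $ j} y \<partial>lborel)) \<partial>lborel)"
    using null_sets_coordinate_hyperplane[of j] lowest_point_density_nonneg integrable_lowest_point_density
    by (intro lborel.integral_div_one_plus_upper_mass[symmetric]) auto
  also have "\<dots> = (\<integral>x\<in>cube n. one_point_density \<phi> (act_t l n j (x $ j)) x \<partial>lborel)"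
    by (simp add: set_lebesgue_integral_def one_point_density_act_t_eq)
  finally show ?thesis .
qed

end
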